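(* For every $\varepsilon>0$ there exist a binary sequence $\boldsymbol{a}=(a_n)_{n=1}^\infty\in\{0,1\}^{\mathbb{N}}$ and a sequence $(N_m)_{m=1}^\infty$ of natural numbers such that: (i) $\liminf_{n\to\infty}\frac{1}{n}\sum_{j=1}^n a_j\geq 1-\varepsilon$; and (ii) for all $m\in\mathbb{N}$ and $j\in\mathbb{N}$, the finite sequence $(a_j,a_{j+1},\ldots,a_{j+N_m-1})$ contains $m$ consecutive zeros. *)

theory Defs
  imports "HOL-Analysis.Analysis"
begin

end

theory Submission
  imports Defs
begin

(* Choose block lengths Q m = 2^(m+c) and let a vanish on the first m entries of every
   block [q Q m, (q+1) Q m) with q >= 1, for every m >= 1, and be 1 elsewhere.  Every window of
   length Q m + m then meets such a run of m zeros, while the run family for m has density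
   m / Q m, so all zeros together have upper density at most sum m / 2^(m+c) <= 2 / 2^c. *)

definition gap_set :: "(nat \<Rightarrow> nat) \<Rightarrow> nat set" where
  "gap_set Q = {k. \<exists>m\<ge>1. Q m \<le> k \<and> k mod Q m < m}"

definition gap_seq :: "(nat \<Rightarrow> nat) \<Rightarrow> nat \<Rightarrow> nat" where
  "gap_seq Q k = (if k \<in> gap_set Q then 0 else 1)"

lemma gap_set_contains_run:
  assumes "1 \<le> m" and "m \<le> Q m"
  shows "\<exists>i. j \<le> i \<and> i + m \<le> j + (Q m + m) \<and> {i..<i+m} \<subseteq> gap_set Q"
proof -
  define i where "i = (j div Q m + 1) * Q m"
  have "i = j div Q m * Q m + Q m" and "j mod Q m < Q m"
    using assms by (simp_all add: i_def)
  then have "j \<le> i" and "i \<le> j + Q m"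
    using div_mult_mod_eq[of j "Q m"] by linarith+
  moreover have "k \<in> gap_set Q" if k: "k \<in> {i..<i+m}" for k
  proof -
    have "k mod Q m = (k - i) mod Q m"
      using k by (metis i_def atLeastLessThan_iff le_add_diff_inverse mod_mult_self3)
    also have "\<dots> = k - i"
      using k assms(2) by (simp add: less_diff_conv2)
    finally have "k mod Q m < m"
      using k by auto
    moreover have "Q m \<le> k"
      using k by (simp add: i_def)
    ultimately show ?thesis
      using assms(1) unfolding gap_set_def by blast
  qed
  ultimately show ?thesis
    by (intro exI[of _ i]) auto
qed

lemma card_low_residues_le:
  fixes q m n :: nat
  assumes "0 < q"
  shows "card {k\<in>{1..n}. q \<le> k \<and> k mod q < m} \<le> (n div q) * m"
proof -
  have "{k\<in>{1..n}. q \<le> k \<and> k mod q < m} \<subseteq> (\<lambda>(d, r). d * q + r) ` ({1..n div q} \<times> {..<m})"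
  proof
    fix k assume k: "k \<in> {k\<in>{1..n}. q \<le> k \<and> k mod q < m}"
    have "1 \<le> k div q"
      using k assms div_le_mono[of q k q] by simp
    moreover have "k div q \<le> n div q"
      using k by (simp add: div_le_mono)
    ultimately show "k \<in> (\<lambda>(d, r). d * q + r) ` ({1..n div q} \<times> {..<m})"
      using k by (intro image_eqI[of _ _ "(k div q, k mod q)"]) auto
  qed
  then have "card {k\<in>{1..n}. q \<le> k \<and> k mod q < m}
      \<le> card ((\<lambda>(d, r). d * q + r) ` ({1..n div q} \<times> {..<m}))"
    by (intro card_mono) auto
  also have "\<dots> \<le> card ({1..n div q} \<times> {..<m})"
    by (rule card_image_le) auto
  finally show ?thesis
    by (simp add: card_cartesian_product)
qed

lemma card_gap_set_le:
  assumes "\<And>m. m \<le> Q m"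
  shows "card (gap_set Q \<inter> {1..n}) \<le> (\<Sum>m=1..n. (n div Q m) * m)"
proof -
  have "gap_set Q \<inter> {1..n} \<subseteq> (\<Union>m\<in>{1..n}. {k\<in>{1..n}. Q m \<le> k \<and> k mod Q m < m})"
  proof
    fix k assume "k \<in> gap_set Q \<inter> {1..n}"
    then obtain m where "1 \<le> m" "Q m \<le> k" "k mod Q m < m" "k \<in> {1..n}"
      unfolding gap_set_def by auto
    moreover have "m \<le> n"
      using assms[of m] calculation by simp
    ultimately show "k \<in> (\<Union>m\<in>{1..n}. {k\<in>{1..n}. Q m \<le> k \<and> k mod Q m < m})"
      by auto
  qed
  then have "card (gap_set Q \<inter> {1..n})
      \<le> card (\<Union>m\<in>{1..n}. {k\<in>{1..n}. Q m \<le> k \<and> k mod Q m < m})"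
    by (intro card_mono) auto
  also have "\<dots> \<le> (\<Sum>m=1..n. card {k\<in>{1..n}. Q m \<le> k \<and> k mod Q m < m})"
    by (rule card_UN_le) auto
  also have "\<dots> \<le> (\<Sum>m=1..n. (n div Q m) * m)"
    using assms by (intro sum_mono card_low_residues_le) (auto intro: less_le_trans)
  finally show ?thesis .
qed

lemma sum_nat_div_power2: "(\<Sum>m\<le>n. real m / 2^m) = 2 - (real n + 2) / 2^n"
  by (induction n) (simp_all add: field_simps)

lemma le_power2_add: "m \<le> (2::nat)^(m+c)"
proof -
  have "(2::nat)^m \<le> 2^(m+c)"
    by (rule power_increasing) auto
  then show ?thesis
    using less_exp[of m] by linarith
qed

lemma card_gap_set_power2_le:
  "real (card (gap_set (\<lambda>m. 2^(m+c)) \<inter> {1..n})) \<le> 2 * real n / 2^c"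
proof -
  have "real (card (gap_set (\<lambda>m. 2^(m+c)) \<inter> {1..n})) \<le> (\<Sum>m=1..n. real ((n div 2^(m+c)) * m))"
    by (metis card_gap_set_le le_power2_add of_nat_le_iff of_nat_sum)
  also have "\<dots> \<le> (\<Sum>m=1..n. real n / 2^c * (real m / 2^m))"
  proof (rule sum_mono)
    fix m
    have "real (n div 2^(m+c)) \<le> real n / 2^(m+c)"
      by (metis of_nat_div_le_of_nat of_nat_numeral of_nat_power)
    then have "real (n div 2^(m+c)) * real m \<le> real n / 2^(m+c) * real m"
      by (rule mult_right_mono) simp
    then show "real ((n div 2^(m+c)) * m) \<le> real n / 2^c * (real m / 2^m)"
      by (simp add: power_add ac_simps)
  qed
  also have "\<dots> = real n / 2^c * (\<Sum>m=1..n. real m / 2^m)"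
    by (simp add: sum_distrib_left)
  also have "\<dots> \<le> real n / 2^c * (\<Sum>m\<le>n. real m / 2^m)"
    by (intro mult_left_mono sum_mono2) auto
  also have "\<dots> \<le> real n / 2^c * 2"
    by (intro mult_left_mono) (simp_all add: sum_nat_div_power2)
  finally show ?thesis
    by (simp add: mult.commute)
qed

lemma sum_gap_seq:
  "(\<Sum>j=1..n. real (gap_seq Q j)) = real n - real (card (gap_set Q \<inter> {1..n}))"
proof -
  have "(\<Sum>j=1..n. real (gap_seq Q j)) = (\<Sum>j\<in>{1..n} - gap_set Q. 1)"
    by (rule sum.mono_neutral_cong_right) (auto simp: gap_seq_def)
  also have "\<dots> = real (card ({1..n} - gap_set Q))"
    by simp
  also have "\<dots> = real n - real (card (gap_set Q \<inter> {1..n}))"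
  proof -
    have "card (gap_set Q \<inter> {1..n}) \<le> card {1..n}"
      by (intro card_mono) auto
    then show ?thesis
      by (simp add: card_Diff_subset_Int Int_commute of_nat_diff)
  qed
  finally show ?thesis .
qed

theorem lemma2p2:
  fixes \<epsilon> :: real
  assumes "\<epsilon> > 0"
  shows "\<exists>(a :: nat \<Rightarrow> nat) (N :: nat \<Rightarrow> nat).
           (\<forall>n\<ge>1. a n \<in> {0, 1}) \<and>
           liminf (\<lambda>n. ereal ((\<Sum>j=1..n. real (a j)) / real n)) \<ge> ereal (1 - \<epsilon>) \<and>
           (\<forall>m\<ge>1. \<forall>j\<ge>1. \<exists>i. j \<le> i \<and> i + m \<le> j + N m \<and>
                (\<forall>k\<in>{i..<i+m}. a k = 0))"
proof -
  obtain c :: nat where "(1/2) ^ c < \<epsilon> / 2"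
    using real_arch_pow_inv[of "\<epsilon>/2" "1/2"] assms by auto
  then have c: "2 / 2^c \<le> \<epsilon>"
    by (simp add: power_divide field_simps)
  define Q :: "nat \<Rightarrow> nat" where "Q = (\<lambda>m. 2^(m+c))"
  define a where "a = gap_seq Q"
  define N :: "nat \<Rightarrow> nat" where "N m = Q m + m" for m
  have "m \<le> Q m" for m
    by (simp add: Q_def le_power2_add)
  then have runs: "\<forall>m\<ge>1. \<forall>j\<ge>1. \<exists>i. j \<le> i \<and> i + m \<le> j + N m \<and> (\<forall>k\<in>{i..<i+m}. a k = 0)"
    unfolding a_def N_def gap_seq_def by (metis gap_set_contains_run subsetD)
  have "(\<Sum>j=1..n. real (a j)) / real n \<ge> 1 - \<epsilon>" if "n \<ge> 1" for n
  proof -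
    have "real (card (gap_set Q \<inter> {1..n})) \<le> 2 * real n / 2^c"
      using card_gap_set_power2_le[of c n] by (simp add: Q_def)
    also have "\<dots> = real n * (2 / 2^c)"
      by simp
    also have "\<dots> \<le> real n * \<epsilon>"
      using c by (intro mult_left_mono) auto
    finally have "real (card (gap_set Q \<inter> {1..n})) \<le> real n * \<epsilon>" .
    then show ?thesis
      using that unfolding a_def sum_gap_seq by (simp add: field_simps)
  qed
  then have "liminf (\<lambda>n. ereal ((\<Sum>j=1..n. real (a j)) / real n)) \<ge> ereal (1 - \<epsilon>)"
    by (intro Liminf_bounded) (auto simp: eventually_sequentially)
  then show ?thesis
    using runs by (intro exI[of _ a] exI[of _ N]) (auto simp: a_def gap_seq_def)
qed

end
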